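(* Let $G$ be a graph with girth at least $5$ and $G\not\cong P_2$, and let $S\subseteq V(G)$ be an MLD-set of $G$. Then each $u\in S$ has at most one neighbor of degree $1$ in $V(G)\setminus S$; define $\overline u$ to be that neighbor if it exists and $\overline u=u$ otherwise. The set $\overline S=\{\overline u:u\in S\}$ is a doubly resolving set of $G$ with $|\overline S|=|S|$. Consequently, $\psi(G)\le\gamma_M(G)$.
   Context: All graphs are finite, simple, undirected and connected, with at least 2 vertices; $d(u,v)$ is the shortest-path distance; the girth is the length of a shortest cycle (infinite if acyclic). A set $S\subseteq V(G)$ is resolving if for all distinct $x,y\in V(G)$ there is $u\in S$ with $d(u,x)\ne d(u,y)$; dominating if every vertex not in $S$ has a neighbor in $S$. An MLD-set is a set both resolving and dominating; $\gamma_M(G)$ is its minimum size. Two vertices $u,v$ doubly resolve a pair $\{x,y\}$ if $d(u,x)-d(u,y)\ne d(v,x)-d(v,y)$. A set $S$ is a doubly resolving set if every pair of distinct vertices of $G$ is doubly resolved by two vertices of $S$; $\psi(G)$ is the minimum size of a doubly resolving set. *)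

theory Defs
  imports Main "HOL-Library.Extended_Nat"
begin

definition walk :: "'a set \<Rightarrow> ('a \<Rightarrow> 'a \<Rightarrow> bool) \<Rightarrow> 'a list \<Rightarrow> bool" where
  "walk V E xs \<longleftrightarrow> xs \<noteq> [] \<and> set xs \<subseteq> V \<and> (\<forall>i. Suc i < length xs \<longrightarrow> E (xs ! i) (xs ! Suc i))"

definition simple_graph :: "'a set \<Rightarrow> ('a \<Rightarrow> 'a \<Rightarrow> bool) \<Rightarrow> bool" where
  "simple_graph V E \<longleftrightarrow> finite V \<and> card V \<ge> 2
     \<and> (\<forall>x y. E x y \<longrightarrow> x \<in> V \<and> y \<in> V)
     \<and> (\<forall>x y. E x y \<longrightarrow> E y x) \<and> (\<forall>x. \<not> E x x)
     \<and> (\<forall>x\<in>V. \<forall>y\<in>V. \<exists>xs. walk V E xs \<and> hd xs = x \<and> last xs = y)"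

definition dist :: "'a set \<Rightarrow> ('a \<Rightarrow> 'a \<Rightarrow> bool) \<Rightarrow> 'a \<Rightarrow> 'a \<Rightarrow> nat" where
  "dist V E x y = (LEAST n. \<exists>xs. walk V E xs \<and> hd xs = x \<and> last xs = y \<and> length xs = Suc n)"

definition is_cycle :: "'a set \<Rightarrow> ('a \<Rightarrow> 'a \<Rightarrow> bool) \<Rightarrow> 'a list \<Rightarrow> bool" where
  "is_cycle V E xs \<longleftrightarrow> walk V E xs \<and> distinct xs \<and> length xs \<ge> 3 \<and> E (last xs) (hd xs)"

definition girth :: "'a set \<Rightarrow> ('a \<Rightarrow> 'a \<Rightarrow> bool) \<Rightarrow> enat" where
  "girth V E = (INF xs \<in> {xs. is_cycle V E xs}. enat (length xs))"

definition iso_P2 :: "'a set \<Rightarrow> ('a \<Rightarrow> 'a \<Rightarrow> bool) \<Rightarrow> bool" where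
  "iso_P2 V E \<longleftrightarrow> (\<exists>a b. a \<noteq> b \<and> V = {a, b} \<and> E a b \<and> E b a
                       \<and> (\<forall>x y. E x y \<longleftrightarrow> (x = a \<and> y = b) \<or> (x = b \<and> y = a)))"

definition degree :: "'a set \<Rightarrow> ('a \<Rightarrow> 'a \<Rightarrow> bool) \<Rightarrow> 'a \<Rightarrow> nat" where
  "degree V E v = card {w \<in> V. E v w}"

definition resolving :: "'a set \<Rightarrow> ('a \<Rightarrow> 'a \<Rightarrow> bool) \<Rightarrow> 'a set \<Rightarrow> bool" where
  "resolving V E S \<longleftrightarrow> S \<subseteq> V \<and>
     (\<forall>x\<in>V. \<forall>y\<in>V. x \<noteq> y \<longrightarrow> (\<exists>u\<in>S. dist V E u x \<noteq> dist V E u y))"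

definition dominating :: "'a set \<Rightarrow> ('a \<Rightarrow> 'a \<Rightarrow> bool) \<Rightarrow> 'a set \<Rightarrow> bool" where
  "dominating V E S \<longleftrightarrow> S \<subseteq> V \<and> (\<forall>x\<in>V - S. \<exists>u\<in>S. E x u)"

definition MLD_set :: "'a set \<Rightarrow> ('a \<Rightarrow> 'a \<Rightarrow> bool) \<Rightarrow> 'a set \<Rightarrow> bool" where
  "MLD_set V E S \<longleftrightarrow> resolving V E S \<and> dominating V E S"

definition gamma_M :: "'a set \<Rightarrow> ('a \<Rightarrow> 'a \<Rightarrow> bool) \<Rightarrow> nat" where
  "gamma_M V E = (LEAST k. \<exists>S. MLD_set V E S \<and> card S = k)"

definition doubly_resolves :: "'a set \<Rightarrow> ('a \<Rightarrow> 'a \<Rightarrow> bool) \<Rightarrow> 'a \<Rightarrow> 'a \<Rightarrow> 'a \<Rightarrow> 'a \<Rightarrow> bool" where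
  "doubly_resolves V E u v x y \<longleftrightarrow>
     int (dist V E u x) - int (dist V E u y) \<noteq> int (dist V E v x) - int (dist V E v y)"

definition doubly_resolving :: "'a set \<Rightarrow> ('a \<Rightarrow> 'a \<Rightarrow> bool) \<Rightarrow> 'a set \<Rightarrow> bool" where
  "doubly_resolving V E S \<longleftrightarrow> S \<subseteq> V \<and>
     (\<forall>x\<in>V. \<forall>y\<in>V. x \<noteq> y \<longrightarrow> (\<exists>u\<in>S. \<exists>v\<in>S. doubly_resolves V E u v x y))"

definition psi :: "'a set \<Rightarrow> ('a \<Rightarrow> 'a \<Rightarrow> bool) \<Rightarrow> nat" where
  "psi V E = (LEAST k. \<exists>S. doubly_resolving V E S \<and> card S = k)"

end

theory Submission
  imports Defs
begin

(*
  Replacing u in S by its pendant neighbour bar u adds 1 to the distance to every vertex other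
  than bar u, so bar ` S still resolves G. If no two vertices of bar ` S doubly resolve x \<noteq> y,
  then d w x - d w y is a constant c on bar ` S; c = 0 contradicts resolvability, and by symmetry
  we may take c > 0. Domination of x then leaves two possibilities. Either y = bar u with x = u or
  x adjacent to u; then every bar v is closer to bar u than to u, which forces S = {u} and G = P2.
  Or x \<notin> S and y = u is a neighbour of x with d w x = d w u + 1 for all w in S; then x has a
  second neighbour z \<notin> S, and a vertex of S dominating z closes a cycle of length 3 or 4
  through u, x, z.
*)

lemma walk_singleton [simp]: "walk V E [x] \<longleftrightarrow> x \<in> V"
  by (simp add: walk_def)

lemma walk_Cons_Cons [simp]:
  "walk V E (x # y # ys) \<longleftrightarrow> x \<in> V \<and> E x y \<and> walk V E (y # ys)"
  unfolding walk_def by (auto simp: less_Suc_eq_0_disj)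

lemma walk_append:
  "xs \<noteq> [] \<Longrightarrow> ys \<noteq> [] \<Longrightarrow>
    walk V E (xs @ ys) \<longleftrightarrow> walk V E xs \<and> walk V E ys \<and> E (last xs) (hd ys)"
proof (induction xs rule: induct_list012)
  case (2 x)
  then show ?case by (cases ys) auto
qed auto

lemma walk_rev:
  assumes "\<And>a b. E a b \<Longrightarrow> E b a" and "walk V E xs"
  shows "walk V E (rev xs)"
  using assms(2)
proof (induction xs rule: induct_list012)
  case (3 x y zs)
  then show ?case
    using walk_append[of "rev zs @ [y]" "[x]" V E] assms(1) by simp
qed simp_all

locale connected_graph =
  fixes V :: "'a set" and E :: "'a \<Rightarrow> 'a \<Rightarrow> bool"
  assumes simple_graph: "simple_graph V E"
begin

lemma card_V: "card V \<ge> 2"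
  and adj_in_V: "E x y \<Longrightarrow> x \<in> V \<and> y \<in> V"
  and adj_sym: "E x y \<Longrightarrow> E y x"
  and adj_irrefl: "\<not> E x x"
  and connected: "x \<in> V \<Longrightarrow> y \<in> V \<Longrightarrow> \<exists>xs. walk V E xs \<and> hd xs = x \<and> last xs = y"
  using simple_graph by (simp_all add: simple_graph_def)

abbreviation d where "d \<equiv> dist V E"

lemma dist_le_walk:
  assumes "walk V E xs" "hd xs = x" "last xs = y"
  shows "d x y \<le> length xs - 1"
proof -
  have "length xs = Suc (length xs - 1)"
    using assms(1) by (cases xs) (auto simp: walk_def)
  then show ?thesis
    unfolding dist_def using assms by (intro Least_le) auto
qed

lemma shortest_walk:
  assumes "x \<in> V" "y \<in> V"
  obtains xs where "walk V E xs" "hd xs = x" "last xs = y" "length xs = Suc (d x y)"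
proof -
  obtain xs where xs: "walk V E xs" "hd xs = x" "last xs = y"
    using connected[OF assms] by blast
  then have "length xs = Suc (length xs - 1)"
    by (cases xs) (auto simp: walk_def)
  with xs have "\<exists>n xs. walk V E xs \<and> hd xs = x \<and> last xs = y \<and> length xs = Suc n"
    by blast
  from LeastI_ex[OF this] show ?thesis
    using that unfolding dist_def by blast
qed

lemma dist_self [simp]: "x \<in> V \<Longrightarrow> d x x = 0"
  using dist_le_walk[of "[x]" x x] by simp

lemma dist_eq_0_iff:
  assumes "x \<in> V" "y \<in> V"
  shows "d x y = 0 \<longleftrightarrow> x = y"
proof
  assume "d x y = 0"
  obtain xs where "walk V E xs" "hd xs = x" "last xs = y" "length xs = Suc (d x y)"
    using shortest_walk[OF assms] .
  with \<open>d x y = 0\<close> show "x = y"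
    by (cases xs) auto
qed (use assms in simp)

lemma dist_adj: "E x y \<Longrightarrow> d x y = 1"
  using dist_le_walk[of "[x, y]" x y] dist_eq_0_iff[of x y] adj_in_V[of x y] adj_irrefl[of x]
  by fastforce

lemma adj_if_dist_1:
  assumes "x \<in> V" "y \<in> V" "d x y = 1"
  shows "E x y"
proof -
  obtain xs where "walk V E xs" "hd xs = x" "last xs = y" "length xs = Suc (d x y)"
    using shortest_walk[OF assms(1,2)] .
  with assms(3) show ?thesis
    by (auto simp: length_Suc_conv)
qed

lemma dist_sym:
  assumes "x \<in> V" "y \<in> V"
  shows "d x y = d y x"
proof -
  have "d a b \<le> d b a" if ab: "a \<in> V" "b \<in> V" for a b
  proof -
    obtain xs where xs: "walk V E xs" "hd xs = b" "last xs = a" "length xs = Suc (d b a)"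
      using shortest_walk[OF ab(2,1)] .
    then have "xs \<noteq> []" by auto
    with xs have "d a b \<le> length (rev xs) - 1"
      by (intro dist_le_walk walk_rev[OF adj_sym]) (auto simp: hd_rev last_rev)
    with xs show ?thesis by simp
  qed
  with assms show ?thesis by (simp add: le_antisym)
qed

lemma dist_triangle:
  assumes "x \<in> V" "y \<in> V" "z \<in> V"
  shows "d x z \<le> d x y + d y z"
proof -
  obtain xs where xs: "walk V E xs" "hd xs = x" "last xs = y" "length xs = Suc (d x y)"
    using shortest_walk[OF assms(1,2)] .
  obtain ys where ys: "walk V E ys" "hd ys = y" "last ys = z" "length ys = Suc (d y z)"
    using shortest_walk[OF assms(2,3)] .
  show ?thesis
  proof (cases "tl ys")
    case Nil
    with ys have "z = y" by (cases ys) auto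
    with xs show ?thesis using dist_le_walk[OF xs(1-3)] by simp
  next
    case (Cons c zs)
    with ys have ys_eq: "ys = y # c # zs" by (cases ys) auto
    have "xs \<noteq> []" using xs by auto
    with xs ys ys_eq have "d x z \<le> length (xs @ c # zs) - 1"
      by (intro dist_le_walk) (auto simp: walk_append)
    with xs ys ys_eq show ?thesis by simp
  qed
qed

lemma dist_adj_le: "E u v \<Longrightarrow> w \<in> V \<Longrightarrow> d w v \<le> d w u + 1"
  using dist_triangle[of w u v] dist_adj[of u v] adj_in_V by force

lemma dist_last_step:
  assumes "s \<in> V" "w \<in> V" "s \<noteq> w"
  obtains v where "E v w" "d s w = d s v + 1"
proof -
  obtain xs where xs: "walk V E xs" "hd xs = s" "last xs = w" "length xs = Suc (d s w)"
    using shortest_walk[OF assms(1,2)] .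
  have "d s w \<noteq> 0" using dist_eq_0_iff assms by blast
  then obtain ys where xs_eq: "xs = ys @ [w]" and "ys \<noteq> []"
    using xs by (cases xs rule: rev_cases) fastforce+
  then have walk_ys: "walk V E ys" and edge: "E (last ys) w" and hd_ys: "hd ys = s"
    using xs walk_append[of ys "[w]" V E] by auto
  have "d s (last ys) + 1 \<le> d s w"
    using dist_le_walk[OF walk_ys hd_ys refl] xs(4) xs_eq \<open>ys \<noteq> []\<close> by (cases ys) auto
  moreover have "d s w \<le> d s (last ys) + 1"
    using dist_adj_le[OF edge assms(1)] .
  ultimately show ?thesis
    using that edge by simp
qed

lemma leaf_neighbour_unique:
  assumes "degree V E w = 1" "E u w" "E v w"
  shows "v = u"
proof -
  obtain z where "{x \<in> V. E w x} = {z}"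
    using assms(1) card_1_singletonE unfolding degree_def by blast
  moreover have "u \<in> {x \<in> V. E w x}" "v \<in> {x \<in> V. E w x}"
    using assms(2,3) adj_sym adj_in_V by auto
  ultimately show ?thesis by auto
qed

lemma dist_to_leaf:
  assumes "degree V E w = 1" "E u w" "s \<in> V" "s \<noteq> w"
  shows "d s w = d s u + 1"
proof -
  obtain v where "E v w" "d s w = d s v + 1"
    using dist_last_step[OF assms(3) _ assms(4)] adj_in_V[OF assms(2)] by blast
  then show ?thesis
    using leaf_neighbour_unique[OF assms(1,2)] by simp
qed

lemma dist_from_leaf:
  assumes "degree V E w = 1" "E u w" "s \<in> V" "s \<noteq> w"
  shows "d w s = d u s + 1"
  using dist_to_leaf[OF assms] dist_sym adj_in_V[OF assms(2)] assms(3) by metis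

lemma cycle_length_ge_5: "girth V E \<ge> 5 \<Longrightarrow> is_cycle V E xs \<Longrightarrow> length xs \<ge> 5"
  using order_trans[of 5 "girth V E" "enat (length xs)"]
  by (force simp: girth_def numeral_eq_enat intro: INF_lower)

lemma MLD_set_subset: "MLD_set V E S \<Longrightarrow> S \<subseteq> V"
  and MLD_set_dominates: "MLD_set V E S \<Longrightarrow> x \<in> V - S \<Longrightarrow> \<exists>u\<in>S. E x u"
  and MLD_set_resolves:
    "MLD_set V E S \<Longrightarrow> x \<in> V \<Longrightarrow> y \<in> V \<Longrightarrow> x \<noteq> y \<Longrightarrow> \<exists>u\<in>S. d u x \<noteq> d u y"
  by (auto simp: MLD_set_def resolving_def dominating_def)

lemma MLD_set_V: "MLD_set V E V"
  unfolding MLD_set_def resolving_def dominating_def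
  by (metis Diff_cancel dist_eq_0_iff dist_self empty_iff order_refl)

lemma MLD_leaf_neighbour_unique:
  assumes S: "MLD_set V E S"
    and "E u w1" "w1 \<in> V - S" "degree V E w1 = 1"
    and "E u w2" "w2 \<in> V - S" "degree V E w2 = 1"
  shows "w1 = w2"
proof (rule ccontr)
  assume "w1 \<noteq> w2"
  then obtain s where "s \<in> S" "d s w1 \<noteq> d s w2"
    using MLD_set_resolves[OF S] assms by blast
  moreover have "s \<in> V" "s \<noteq> w1" "s \<noteq> w2"
    using \<open>s \<in> S\<close> assms(3,6) MLD_set_subset[OF S] by auto
  ultimately show False
    using dist_to_leaf[of w1 u s] dist_to_leaf[of w2 u s] assms by simp
qed

lemma MLD_singleton_iso_P2:
  assumes S: "MLD_set V E {a}"
  shows "iso_P2 V E"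
proof -
  have a: "a \<in> V" using MLD_set_subset[OF S] by simp
  have adj_a: "E z a" if "z \<in> V" "z \<noteq> a" for z
    using MLD_set_dominates[OF S] that by auto
  obtain b where b: "b \<in> V" "b \<noteq> a"
  proof (rule ccontr)
    assume "\<not> thesis"
    with that have "V \<subseteq> {a}" by blast
    from card_mono[OF _ this] card_V show False by simp
  qed
  have "z = b" if "z \<in> V" "z \<noteq> a" for z
    using MLD_set_resolves[OF S that(1) b(1)] dist_adj[OF adj_sym[OF adj_a[OF that]]]
      dist_adj[OF adj_sym[OF adj_a[OF b]]] by auto
  then have V: "V = {a, b}"
    using a b by blast
  have ba: "E b a" and ab: "E a b"
    using adj_a[OF b] adj_sym by blast+
  have adj_iff: "E p q \<longleftrightarrow> (p = a \<and> q = b) \<or> (p = b \<and> q = a)" for p q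
  proof
    assume "E p q"
    then show "(p = a \<and> q = b) \<or> (p = b \<and> q = a)"
      using adj_in_V[of p q] adj_irrefl[of p] V by auto
  qed (use ab ba in blast)
  show ?thesis
    unfolding iso_P2_def using b(2) V ab ba adj_iff by (intro exI[of _ a] exI[of _ b]) simp
qed

end

locale leaf_shift = connected_graph +
  fixes S :: "'a set" and bar :: "'a \<Rightarrow> 'a"
  assumes MLD: "MLD_set V E S"
    and shift: "\<forall>u\<in>S. if (\<exists>w. E u w \<and> w \<in> V - S \<and> degree V E w = 1)
                 then E u (bar u) \<and> bar u \<in> V - S \<and> degree V E (bar u) = 1
                 else bar u = u"
begin

lemma S_subset: "S \<subseteq> V"
  using MLD_set_subset[OF MLD] .

lemma bar_leaf:
  assumes "u \<in> S" "bar u \<noteq> u"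
  shows "E u (bar u)" "bar u \<in> V" "bar u \<notin> S" "degree V E (bar u) = 1"
  using assms shift by (auto split: if_splits)

lemma bar_in_V: "u \<in> S \<Longrightarrow> bar u \<in> V"
  using bar_leaf(2) S_subset by (cases "bar u = u") auto

lemma bar_eq_leaf:
  assumes "u \<in> S" "E u w" "w \<in> V - S" "degree V E w = 1"
  shows "bar u = w"
proof -
  have "E u (bar u) \<and> bar u \<in> V - S \<and> degree V E (bar u) = 1"
    using assms shift by (metis (no_types, lifting))
  with assms show ?thesis
    using MLD_leaf_neighbour_unique[OF MLD] by blast
qed

lemma dist_from_bar:
  assumes "u \<in> S" "z \<in> V" "z \<noteq> bar u"
  shows "d (bar u) z = d u z + (if bar u = u then 0 else 1)"
  using assms dist_from_leaf[OF bar_leaf(4,1)] by auto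

lemma inj_on_bar: "inj_on bar S"
proof
  fix u v assume uv: "u \<in> S" "v \<in> S" "bar u = bar v"
  show "u = v"
  proof (cases "bar u = u \<or> bar v = v")
    case True
    with uv bar_leaf(3) show ?thesis by metis
  next
    case False
    with uv bar_leaf(1,4) show ?thesis by (metis leaf_neighbour_unique)
  qed
qed

lemma bar_image_resolving:
  assumes "x \<in> V" "y \<in> V" "x \<noteq> y"
  shows "\<exists>w\<in>bar ` S. d w x \<noteq> d w y"
proof -
  obtain u where u: "u \<in> S" "d u x \<noteq> d u y"
    using MLD_set_resolves[OF MLD assms] by blast
  have "d (bar u) x \<noteq> d (bar u) y"
  proof (cases "bar u = x \<or> bar u = y")
    case True
    with assms dist_eq_0_iff dist_sym show ?thesis by metis
  next
    case False
    with u assms dist_from_bar[of u] show ?thesis by auto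
  qed
  with u show ?thesis by blast
qed

lemma singleton_if_bar_closer:
  assumes u: "u \<in> S" "bar u \<noteq> u"
    and closer: "\<And>v. v \<in> S \<Longrightarrow> d (bar v) (bar u) \<le> d (bar v) u"
  shows "S = {u}"
proof -
  have "v = u" if v: "v \<in> S" for v
  proof -
    have "bar v = bar u"
      using dist_to_leaf[OF bar_leaf(4,1)[OF u] bar_in_V[OF v]] closer[OF v] by linarith
    with inj_on_bar u(1) v show ?thesis by (simp add: inj_on_eq_iff)
  qed
  with u(1) show ?thesis by blast
qed

lemma no_uniform_shift:
  assumes girth: "girth V E \<ge> 5"
    and x: "x \<in> V" "x \<notin> S" and u: "u \<in> S" "E x u"
  shows "\<exists>w\<in>S. d (bar w) x \<noteq> d (bar w) u + 1"
proof (rule ccontr)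
  assume "\<not> ?thesis"
  then have shifted: "\<And>w. w \<in> S \<Longrightarrow> d (bar w) x = d (bar w) u + 1" by blast
  have uV: "u \<in> V" using u S_subset by blast
  have key: "d w x = d w u + 1" if w: "w \<in> S" for w
  proof (cases "bar w = w")
    case True
    with shifted[OF w] show ?thesis by simp
  next
    case False
    have "bar w \<noteq> x" using shifted[OF w] x(1) by fastforce
    moreover have "bar w \<noteq> u" using bar_leaf(3)[OF w False] u(1) by blast
    ultimately show ?thesis
      using shifted[OF w] dist_from_bar[OF w x(1)] dist_from_bar[OF w uV] by simp
  qed
  have "degree V E x \<noteq> 1"
  proof
    assume "degree V E x = 1"
    with x u have "bar u = x"
      using bar_eq_leaf adj_sym by blast
    with shifted[OF u(1)] x(1) show False by simp
  qed
  then have "{w \<in> V. E x w} \<noteq> {u}"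
    by (auto simp: degree_def)
  then obtain z where z: "z \<in> V" "E x z" "z \<noteq> u"
    using u(2) uV by blast
  have "z \<notin> S"
    using key[of z] dist_adj[OF adj_sym[OF z(2)]] dist_eq_0_iff[OF z(1) uV] z(3) by auto
  then obtain s where s: "s \<in> S" "E z s"
    using MLD_set_dominates[OF MLD] z(1) by blast
  have sV: "s \<in> V" using s(1) S_subset by blast
  have "d s x \<le> 2"
    using dist_triangle[OF sV z(1) x(1)] dist_adj[OF adj_sym[OF s(2)]] dist_adj[OF adj_sym[OF z(2)]]
    by simp
  then have "d s u \<le> 1" using key[OF s(1)] by simp
  then consider "s = u" | "E s u"
    using dist_eq_0_iff[OF sV uV] adj_if_dist_1[OF sV uV] by linarith
  then show False
  proof cases
    case 1
    have "is_cycle V E [u, x, z]"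
      using uV x z adj_sym[OF u(2)] s(2) 1 u(2) adj_irrefl[of x]
      by (auto simp: is_cycle_def)
    then show False using cycle_length_ge_5[OF girth] by fastforce
  next
    case 2
    have "x \<noteq> s" "z \<noteq> s" "u \<noteq> s" "u \<noteq> x" "x \<noteq> z"
      using x(2) s(1) \<open>z \<notin> S\<close> 2 u(2) z(2) adj_irrefl by blast+
    then have "is_cycle V E [u, x, z, s]"
      using uV x z sV adj_sym[OF u(2)] s(2) 2 by (auto simp: is_cycle_def)
    then show False using cycle_length_ge_5[OF girth] by fastforce
  qed
qed

lemma positive_constant_difference_cases:
  assumes x: "x \<in> V" and y: "y \<in> V" and c: "c > 0"
    and const: "\<And>v. v \<in> S \<Longrightarrow> int (d (bar v) x) - int (d (bar v) y) = c"
  obtains u where "u \<in> S" "bar u \<noteq> u" "y = bar u" "x = u \<or> E x u"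
    | "x \<notin> S" "y \<in> S" "E x y" "c = 1"
proof -
  have x_ne_bar: "x \<noteq> bar v" if "v \<in> S" for v
    using const[OF that] c x by force
  show thesis
  proof (cases "x \<in> S")
    case True
    have moved: "bar x \<noteq> x" using x_ne_bar[OF True] by simp
    have "d (bar x) x = 1"
      using dist_adj[OF adj_sym[OF bar_leaf(1)[OF True moved]]] .
    with const[OF True] c have "d (bar x) y = 0" by linarith
    then have "y = bar x"
      using dist_eq_0_iff[OF bar_in_V[OF True] y] by simp
    with True moved that(1) show thesis by blast
  next
    case False
    then obtain u where u: "u \<in> S" "E x u"
      using MLD_set_dominates[OF MLD] x by blast
    have uV: "u \<in> V" using u(1) S_subset by blast
    show thesis
    proof (cases "bar u \<noteq> u \<and> y = bar u")
      case True
      with u that(1) show thesis by blast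
    next
      case not_leaf: False
      have "y = u"
      proof (cases "y = bar u")
        case True
        with not_leaf show ?thesis by simp
      next
        case False
        then have "int (d u x) - int (d u y) = c"
          using const[OF u(1)] dist_from_bar[OF u(1) x x_ne_bar[OF u(1)]]
            dist_from_bar[OF u(1) y] by simp
        with dist_adj[OF adj_sym[OF u(2)]] c have "d u y = 0" by linarith
        then show ?thesis using dist_eq_0_iff[OF uV y] by simp
      qed
      have "c = 1"
      proof (cases "bar u = u")
        case True
        with const[OF u(1)] \<open>y = u\<close> dist_adj[OF adj_sym[OF u(2)]] uV show ?thesis
          by simp
      next
        case False
        with const[OF u(1)] \<open>y = u\<close> dist_adj[OF bar_leaf(1)[OF u(1) False]]
          dist_from_bar[OF u(1) x x_ne_bar[OF u(1)]] dist_adj[OF adj_sym[OF u(2)]]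
        show ?thesis by (simp add: dist_sym[OF uV bar_in_V[OF u(1)]])
      qed
      with False u \<open>y = u\<close> that(2) show thesis by blast
    qed
  qed
qed

lemma bar_image_no_positive_constant_difference:
  assumes girth: "girth V E \<ge> 5" and not_P2: "\<not> iso_P2 V E"
    and x: "x \<in> V" and y: "y \<in> V" and c: "c > 0"
  shows "\<exists>w\<in>bar ` S. int (d w x) - int (d w y) \<noteq> c"
proof (rule ccontr)
  assume "\<not> ?thesis"
  then have const: "\<And>v. v \<in> S \<Longrightarrow> int (d (bar v) x) - int (d (bar v) y) = c" by auto
  show False
  proof (rule positive_constant_difference_cases[OF x y c const])
    fix u assume u: "u \<in> S" "bar u \<noteq> u" "y = bar u" "x = u \<or> E x u"
    have "S = {u}"
    proof (rule singleton_if_bar_closer[OF u(1,2)])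
      fix v assume v: "v \<in> S"
      have "d (bar v) x \<le> d (bar v) u + 1"
        using u(4) dist_adj_le[OF adj_sym, of x u] bar_in_V[OF v] by force
      with const[OF v] c u(3) show "d (bar v) (bar u) \<le> d (bar v) u" by simp
    qed
    then show False using MLD MLD_singleton_iso_P2 not_P2 by blast
  next
    assume "x \<notin> S" "y \<in> S" "E x y" "c = 1"
    with const have "\<forall>w\<in>S. d (bar w) x = d (bar w) y + 1" by force
    with no_uniform_shift[OF girth x \<open>x \<notin> S\<close> \<open>y \<in> S\<close> \<open>E x y\<close>] show False by blast
  qed
qed

lemma card_bar_image: "card (bar ` S) = card S"
  using card_image[OF inj_on_bar] .

lemma doubly_resolving_bar_image:
  assumes girth: "girth V E \<ge> 5" and not_P2: "\<not> iso_P2 V E"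
  shows "doubly_resolving V E (bar ` S)"
  unfolding doubly_resolving_def
proof (intro conjI ballI impI)
  show "bar ` S \<subseteq> V" using bar_in_V by blast
  fix x y assume x: "x \<in> V" and y: "y \<in> V" and "x \<noteq> y"
  obtain s where s: "s \<in> bar ` S"
    using bar_image_resolving[OF x y \<open>x \<noteq> y\<close>] by blast
  define c where "c = int (d s x) - int (d s y)"
  show "\<exists>u\<in>bar ` S. \<exists>v\<in>bar ` S. doubly_resolves V E u v x y"
  proof (rule ccontr)
    assume "\<not> ?thesis"
    with s have const: "\<forall>w\<in>bar ` S. int (d w x) - int (d w y) = c"
      unfolding doubly_resolves_def c_def by blast
    consider "c = 0" | "c > 0" | "- c > 0" by linarith
    then show False
    proof cases
      case 1
      with const bar_image_resolving[OF x y \<open>x \<noteq> y\<close>] show False by auto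
    next
      case 2
      with const bar_image_no_positive_constant_difference[OF girth not_P2 x y] show False
        by blast
    next
      case 3
      from const have "\<forall>w\<in>bar ` S. int (d w y) - int (d w x) = - c" by auto
      with 3 bar_image_no_positive_constant_difference[OF girth not_P2 y x] show False
        by blast
    qed
  qed
qed

end

lemma (in connected_graph) leaf_shift_exists:
  assumes "MLD_set V E S"
  obtains bar where "leaf_shift V E S bar"
proof
  let ?leaf = "\<lambda>u w. E u w \<and> w \<in> V - S \<and> degree V E w = 1"
  show "leaf_shift V E S (\<lambda>u. if \<exists>w. ?leaf u w then SOME w. ?leaf u w else u)"
    by unfold_locales (use assms someI_ex[of "?leaf _"] in auto)
qed

lemma (in connected_graph) psi_le_gamma_M:
  assumes "girth V E \<ge> 5" and "\<not> iso_P2 V E"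
  shows "psi V E \<le> gamma_M V E"
proof -
  obtain S where S: "MLD_set V E S" "card S = gamma_M V E"
    using LeastI_ex[of "\<lambda>k. \<exists>S. MLD_set V E S \<and> card S = k"] MLD_set_V
    unfolding gamma_M_def by blast
  obtain bar where bar: "leaf_shift V E S bar"
    using leaf_shift_exists[OF S(1)] .
  then have "doubly_resolving V E (bar ` S)" "card (bar ` S) = gamma_M V E"
    using leaf_shift.doubly_resolving_bar_image[OF bar assms] leaf_shift.card_bar_image[OF bar] S(2)
    by auto
  then show ?thesis
    unfolding psi_def by (blast intro: Least_le)
qed

theorem proposition10:
  fixes V :: "'a set" and E :: "'a \<Rightarrow> 'a \<Rightarrow> bool" and S :: "'a set"
  assumes "simple_graph V E"
    and "girth V E \<ge> 5"
    and "\<not> iso_P2 V E"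
    and "MLD_set V E S"
  shows "(\<forall>u\<in>S. \<forall>w1 w2. E u w1 \<and> w1 \<in> V - S \<and> degree V E w1 = 1
                      \<and> E u w2 \<and> w2 \<in> V - S \<and> degree V E w2 = 1 \<longrightarrow> w1 = w2)
    \<and> (\<forall>bar :: 'a \<Rightarrow> 'a.
         (\<forall>u\<in>S. if (\<exists>w. E u w \<and> w \<in> V - S \<and> degree V E w = 1)
                 then E u (bar u) \<and> bar u \<in> V - S \<and> degree V E (bar u) = 1
                 else bar u = u)
         \<longrightarrow> doubly_resolving V E (bar ` S) \<and> card (bar ` S) = card S)
    \<and> psi V E \<le> gamma_M V E"
proof -
  interpret connected_graph V E
    using assms(1) by unfold_locales
  have "doubly_resolving V E (bar ` S) \<and> card (bar ` S) = card S"
    if "leaf_shift V E S bar" for bar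
    using leaf_shift.doubly_resolving_bar_image[OF that assms(2,3)] leaf_shift.card_bar_image[OF that]
    by blast
  then show ?thesis
    using MLD_leaf_neighbour_unique[OF assms(4)] psi_le_gamma_M[OF assms(2,3)]
      leaf_shift.intro[OF connected_graph_axioms leaf_shift_axioms.intro[OF assms(4)]]
    by blast
qed

end
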